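(* The eight functions $q^{Z_i},q^{Z_j},q^{Z_k},h_1,h_2,k,f^{X_i},f^{X_j}$ on $TN$ defined below are (i) functionally independent, i.e. $dq^{Z_i}\wedge dq^{Z_j}\wedge dq^{Z_k}\wedge dh_1\wedge dh_2\wedge dk\wedge df^{X_i}\wedge df^{X_j}\neq0$ on an open dense subset of $TN$, and (ii) pairwise Poisson commute with respect to the symplectic form on $TN$ obtained from the canonical symplectic form on $T^*N$ via the identification $TN\cong T^*N$ induced by $g$.
   Context: Let $\mathfrak v$ have orthonormal basis $X_i,X_j,Y_i,Y_j,Y_k$, $\mathfrak z$ orthonormal basis $Z_i,Z_j,Z_k$, $\mathfrak n=\mathfrak v\oplus\mathfrak z$ orthogonal, with two-step nilpotent bracket ($\mathfrak z$ central, $[\mathfrak v,\mathfrak v]\subseteq\mathfrak z$) whose only nonzero basis brackets up to antisymmetry are $[X_i,Y_j]=Z_k$, $[X_i,Y_k]=-Z_j$, $[X_j,Y_i]=-Z_k$, $[X_j,Y_k]=Z_i$. $N$ is the simply connected Lie group with Lie algebra $\mathfrak n$, $g$ the left invariant metric from the inner product. Elements of $N$ are written $(v,z):=\exp(v+z)$; $TN$ is identified with $N\times\mathfrak n$ via left translation. Two functions $f,h$ Poisson commute if $\omega(X_f,X_h)=0$, where $df=\omega(\cdot,X_f)$. Let $\mathfrak x=\mathrm{span}\{X_i,X_j\}$, $\mathfrak y=\mathrm{span}\{Y_i,Y_j,Y_k\}$, $V_{\mathfrak x},V_{\mathfrak y}$ components of $V\in\mathfrak v$. For $Z=Z_c=c_iZ_i+c_jZ_j+c_kZ_k$: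 $E_1(Z)=c_iX_i+c_jX_j$, $E_2(Z)=-c_jY_i+c_iY_j$, $E_3(Z)=|c|(c_jX_i-c_iX_j)$, $E_4(Z)=c_k(c_iY_i+c_jY_j)-(c_i^2+c_j^2)Y_k$, $Y(Z)=c_iY_i+c_jY_j+c_kY_k$; for $c_k\neq0$, $C(Z):\mathfrak y\to\mathfrak x$ has matrix $(c_k|c|^2)^{-1}\begin{pmatrix}-c_ic_j & c_i^2+c_k^2 & -c_jc_k\\ -c_j^2-c_k^2 & c_ic_j & c_ic_k\end{pmatrix}$ w.r.t. $(Y_i,Y_j,Y_k)$, $(X_i,X_j)$; $\phi(x)=e^{-1/x^2}$ ($\phi(0)=0$), $\Phi(Z_c)=\phi(c_k|c|^2)$. At $((v,z),V+Z)$: $q^W=\langle Z,W\rangle$ ($W\in\{Z_i,Z_j,Z_k\}$), $h_1=\langle V,E_1(Z)\rangle^2+\langle V,E_2(Z)\rangle^2$, $h_2=\langle V,E_3(Z)\rangle^2+\langle V,E_4(Z)\rangle^2$, $k=\langle V,Y(Z)\rangle$, and $f^X$ ($X\in\{X_i,X_j\}$) equals $0$ if $c_k=0$ and $\Phi(Z)\sin(2\pi\langle X,v_{\mathfrak x}-C(Z)V_{\mathfrak y}\rangle)$ otherwise. *)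

theory Defs
  imports "HOL-Analysis.Analysis"
begin

text \<open>The Lie algebra n is modelled as real^idx with its standard inner product,
  for which the basis vectors (axis b 1) are orthonormal.\<close>

datatype idx = Xi | Xj | Yi | Yj | Yk | Zi | Zj | Zk

lemma UNIV_idx: "(UNIV :: idx set) = {Xi, Xj, Yi, Yj, Yk, Zi, Zj, Zk}"
  using idx.exhaust by auto

instance idx :: finite
  by standard (simp add: UNIV_idx)

type_synonym nvec = "real ^ idx"

definition bv :: "idx \<Rightarrow> nvec" where
  "bv b = axis b 1"

definition xproj :: "nvec \<Rightarrow> nvec" where
  "xproj U = (\<chi> b. if b \<in> {Xi, Xj} then U $ b else 0)"
definition yproj :: "nvec \<Rightarrow> nvec" where
  "yproj U = (\<chi> b. if b \<in> {Yi, Yj, Yk} then U $ b else 0)"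
definition vproj :: "nvec \<Rightarrow> nvec" where
  "vproj U = (\<chi> b. if b \<in> {Xi, Xj, Yi, Yj, Yk} then U $ b else 0)"
definition zproj :: "nvec \<Rightarrow> nvec" where
  "zproj U = (\<chi> b. if b \<in> {Zi, Zj, Zk} then U $ b else 0)"

text \<open>The Lie bracket: bilinear, antisymmetric, z central, [v,v] in z, with
  [X_i,Y_j]=Z_k, [X_i,Y_k]=-Z_j, [X_j,Y_i]=-Z_k, [X_j,Y_k]=Z_i and all other
  basis brackets (up to antisymmetry) zero.\<close>

definition brk :: "nvec \<Rightarrow> nvec \<Rightarrow> nvec" where
  "brk a b = (\<chi> l. (case l of
       Zi \<Rightarrow> a$Xj * b$Yk - a$Yk * b$Xj
     | Zj \<Rightarrow> - (a$Xi * b$Yk - a$Yk * b$Xi)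
     | Zk \<Rightarrow> (a$Xi * b$Yj - a$Yj * b$Xi) - (a$Xj * b$Yi - a$Yi * b$Xj)
     | _ \<Rightarrow> 0))"

text \<open>An element exp(w) of N (w = v + z in n) is represented by w. For a two-step
  nilpotent group, exp(a) exp(b) = exp(a + b + 1/2 [a,b]).\<close>

definition mult :: "nvec \<Rightarrow> nvec \<Rightarrow> nvec" where
  "mult a b = a + b + (1/2) *\<^sub>R brk a b"

text \<open>Differential at the identity of left translation by w: it sends the
  left-invariant vector U in n to the coordinate tangent vector at w.
  (Justified by the lemma below.)  TN is identified with N x n via this map.\<close>

definition ltr :: "nvec \<Rightarrow> nvec \<Rightarrow> nvec" where
  "ltr w U = U + (1/2) *\<^sub>R brk w U"

lemma linear_brk_left: "linear (brk w)"
  by (rule linearI) (auto simp: brk_def vec_eq_iff algebra_simps split: idx.splits)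

lemma linear_ltr: "linear (ltr w)"
  unfolding ltr_def
  by (intro linear_compose_add linear_ident linear_compose_scale_right linear_brk_left)

lemma mult_has_derivative_ltr: "(mult w has_derivative ltr w) (at 0)"
proof -
  have "mult w = (\<lambda>h. w + ltr w h)"
    by (auto simp: mult_def ltr_def fun_eq_iff)
  moreover have "((\<lambda>h. w + ltr w h) has_derivative ltr w) (at 0)"
    using linear_ltr[of w]
    by (auto intro!: derivative_eq_intros simp: linear_imp_has_derivative)
  ultimately show ?thesis by simp
qed

text \<open>A point ((v,z), V+Z) of TN is a pair (w, U) of elements of n, where w = v + z
  gives the base point exp(w) and U = V + Z is the left-trivialised tangent vector.
  Z = c_i Z_i + c_j Z_j + c_k Z_k.\<close>

type_synonym tpt = "nvec \<times> nvec"

definition ncz :: "nvec \<Rightarrow> real" where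
  "ncz Z = sqrt ((Z$Zi)^2 + (Z$Zj)^2 + (Z$Zk)^2)"

definition E1 :: "nvec \<Rightarrow> nvec" where
  "E1 Z = (Z$Zi) *\<^sub>R bv Xi + (Z$Zj) *\<^sub>R bv Xj"
definition E2 :: "nvec \<Rightarrow> nvec" where
  "E2 Z = (- Z$Zj) *\<^sub>R bv Yi + (Z$Zi) *\<^sub>R bv Yj"
definition E3 :: "nvec \<Rightarrow> nvec" where
  "E3 Z = ncz Z *\<^sub>R ((Z$Zj) *\<^sub>R bv Xi - (Z$Zi) *\<^sub>R bv Xj)"
definition E4 :: "nvec \<Rightarrow> nvec" where
  "E4 Z = (Z$Zk) *\<^sub>R ((Z$Zi) *\<^sub>R bv Yi + (Z$Zj) *\<^sub>R bv Yj)
          - ((Z$Zi)^2 + (Z$Zj)^2) *\<^sub>R bv Yk"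
definition YZ :: "nvec \<Rightarrow> nvec" where
  "YZ Z = (Z$Zi) *\<^sub>R bv Yi + (Z$Zj) *\<^sub>R bv Yj + (Z$Zk) *\<^sub>R bv Yk"

text \<open>C(Z) : y \<rightarrow> x (for c_k \<noteq> 0), given by its matrix w.r.t. (Y_i,Y_j,Y_k), (X_i,X_j).\<close>

definition CZ :: "nvec \<Rightarrow> nvec \<Rightarrow> nvec" where
  "CZ Z Y = (let ci = Z$Zi; cj = Z$Zj; ck = Z$Zk; d = ck * (ncz Z)^2 in
      (((- (ci * cj)) * Y$Yi + (ci^2 + ck^2) * Y$Yj + (- (cj * ck)) * Y$Yk) / d) *\<^sub>R bv Xi
    + (((- (cj^2) - ck^2) * Y$Yi + (ci * cj) * Y$Yj + (ci * ck) * Y$Yk) / d) *\<^sub>R bv Xj)"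

definition phi :: "real \<Rightarrow> real" where
  "phi x = (if x = 0 then 0 else exp (- 1 / x^2))"

definition PhiZ :: "nvec \<Rightarrow> real" where
  "PhiZ Z = phi ((Z$Zk) * (ncz Z)^2)"

definition qf :: "idx \<Rightarrow> tpt \<Rightarrow> real" where
  "qf W y = inner (zproj (snd y)) (bv W)"

definition h1 :: "tpt \<Rightarrow> real" where
  "h1 y = (let V = vproj (snd y); Z = zproj (snd y) in
     (inner V (E1 Z))^2 + (inner V (E2 Z))^2)"

definition h2 :: "tpt \<Rightarrow> real" where
  "h2 y = (let V = vproj (snd y); Z = zproj (snd y) in
     (inner V (E3 Z))^2 + (inner V (E4 Z))^2)"

definition kf :: "tpt \<Rightarrow> real" where
  "kf y = (let V = vproj (snd y); Z = zproj (snd y) in inner V (YZ Z))"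

definition ff :: "idx \<Rightarrow> tpt \<Rightarrow> real" where
  "ff X y = (let v = vproj (fst y); V = vproj (snd y); Z = zproj (snd y) in
     if Z$Zk = 0 then 0
     else PhiZ Z * sin (2 * pi * inner (bv X) (xproj v - CZ Z (yproj V))))"

datatype fidx = QZi | QZj | QZk | H1 | H2 | K | FXi | FXj

lemma UNIV_fidx: "(UNIV :: fidx set) = {QZi, QZj, QZk, H1, H2, K, FXi, FXj}"
  using fidx.exhaust by auto

instance fidx :: finite
  by standard (simp add: UNIV_fidx)

definition fam :: "fidx \<Rightarrow> tpt \<Rightarrow> real" where
  "fam a = (case a of QZi \<Rightarrow> qf Zi | QZj \<Rightarrow> qf Zj | QZk \<Rightarrow> qf Zk
     | H1 \<Rightarrow> h1 | H2 \<Rightarrow> h2 | K \<Rightarrow> kf | FXi \<Rightarrow> ff Xi | FXj \<Rightarrow> ff Xj)"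

text \<open>The wedge of the differentials df_a (a in the finite index set) is nonzero at y iff
  the f_a are differentiable at y with linearly independent differentials.\<close>

definition wedge_nonzero_at :: "('i::finite \<Rightarrow> 'x::real_normed_vector \<Rightarrow> real) \<Rightarrow> 'x \<Rightarrow> bool" where
  "wedge_nonzero_at f y \<longleftrightarrow> (\<exists>D. (\<forall>a. (f a has_derivative D a) (at y)) \<and>
      (\<forall>c. (\<forall>u. (\<Sum>a\<in>UNIV. c a * D a u) = 0) \<longrightarrow> (\<forall>a. c a = 0)))"

text \<open>T*N in the global coordinates w of N: pairs (x, p) with p the covector
  \<eta> \<mapsto> p \<bullet> \<eta>. Canonical symplectic form \<omega> = \<Sum> dx^a \<and> dp_a.\<close>

definition omega :: "tpt \<Rightarrow> tpt \<Rightarrow> real" where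
  "omega u u' = inner (fst u) (snd u') - inner (fst u') (snd u)"

text \<open>Left-invariant metric: g_x(\<xi>,\<eta>) = <U, U'> where \<xi> = ltr x U, \<eta> = ltr x U'.
  The Legendre map TN \<rightarrow> T*N sends (x, U) to (x, p) with p \<bullet> (ltr x U') = U \<bullet> U' for all U';
  its inverse is (x, p) \<mapsto> (x, adjoint (ltr x) p).\<close>

definition leg_inv :: "tpt \<Rightarrow> tpt" where
  "leg_inv y = (fst y, adjoint (ltr (fst y)) (snd y))"

text \<open>Functions on TN Poisson commute for the pulled-back form iff their transports to
  T*N by the inverse Legendre map do.\<close>

definition poisson_commute :: "(tpt \<Rightarrow> real) \<Rightarrow> (tpt \<Rightarrow> real) \<Rightarrow> bool" where
  "poisson_commute F G \<longleftrightarrow> (\<forall>y. \<exists>DF DG XF XG.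
      (F has_derivative DF) (at y) \<and> (G has_derivative DG) (at y) \<and>
      (\<forall>u. DF u = omega u XF) \<and> (\<forall>u. DG u = omega u XG) \<and>
      omega XF XG = 0)"

definition poisson_commute_TN :: "(tpt \<Rightarrow> real) \<Rightarrow> (tpt \<Rightarrow> real) \<Rightarrow> bool" where
  "poisson_commute_TN f h \<longleftrightarrow> poisson_commute (f \<circ> leg_inv) (h \<circ> leg_inv)"

end

theory Submission
  imports Defs
begin

text \<open>
  Pulled back to the left trivialisation \<open>TN \<cong> N \<times> n\<close>, the canonical symplectic form gives
  \<open>{F, G}(x, U) = \<langle>\<partial>\<^sub>UG, \<partial>\<^sub>xF\<rangle> - \<langle>\<partial>\<^sub>UF, \<partial>\<^sub>xG\<rangle> - \<langle>U, [\<partial>\<^sub>UF, \<partial>\<^sub>UG]\<rangle>\<close>, where the base derivatives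
  may be taken in exponential coordinates as long as they have no \<open>z\<close>-component.
  The functions \<open>q\<^sup>W, h\<^sub>1, h\<^sub>2, k\<close> depend on \<open>U\<close> only, so only the Lie-Poisson term survives:
  the \<open>q\<^sup>W\<close> are Casimirs because \<open>z\<close> is central, and \<open>h\<^sub>1, h\<^sub>2, k\<close> commute by a polynomial
  identity. The base derivative of \<open>f\<^sup>X\<close> points along \<open>X\<close>, and \<open>C(Z)\<close> is chosen so that the
  phase \<open>\<langle>X, v\<^sub>x - C(Z) V\<^sub>y\<rangle>\<close> commutes with every function of \<open>U\<close> and the two phases commute
  with each other. The flat factor \<open>\<Phi>\<close> makes \<open>f\<^sup>X\<close> differentiable across \<open>c\<^sub>k = 0\<close>.
  Independence holds where \<open>c\<^sub>k\<close>, \<open>\<langle>V, E\<^sub>1(Z)\<rangle>\<close>, \<open>\<langle>V, E\<^sub>3(Z)\<rangle>\<close> and both cosines of the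
  phases are nonzero: there the differentials are triangular on suitable test directions.
  This set is open, and dense since each condition can be achieved by small shifts.
\<close>

lemma inner_nvec:
  "inner (a::nvec) b = a$Xi*b$Xi + a$Xj*b$Xj + a$Yi*b$Yi + a$Yj*b$Yj + a$Yk*b$Yk
     + a$Zi*b$Zi + a$Zj*b$Zj + a$Zk*b$Zk"
  by (simp add: inner_vec_def UNIV_idx)

lemma bv_nth [simp]: "bv a $ b = (if a = b then 1 else 0)"
  by (simp add: bv_def axis_def)

lemma inner_bv [simp]: "inner (v::nvec) (bv b) = v $ b" "inner (bv b) v = v $ b"
  by (simp_all add: bv_def inner_axis inner_axis')

lemma norm_bv [simp]: "norm (bv b) = 1"
  by (simp add: bv_def)

lemma vproj_nth [simp]: "vproj U $ b = (if b \<in> {Xi, Xj, Yi, Yj, Yk} then U $ b else 0)"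
  by (simp add: vproj_def)

lemma zproj_nth [simp]: "zproj U $ b = (if b \<in> {Zi, Zj, Zk} then U $ b else 0)"
  by (simp add: zproj_def)

lemma xproj_nth [simp]: "xproj U $ b = (if b \<in> {Xi, Xj} then U $ b else 0)"
  by (simp add: xproj_def)

lemma yproj_nth [simp]: "yproj U $ b = (if b \<in> {Yi, Yj, Yk} then U $ b else 0)"
  by (simp add: yproj_def)

lemma has_derivative_vec_nth [derivative_intros]:
  "(f has_derivative f') F \<Longrightarrow> ((\<lambda>x. f x $ b) has_derivative (\<lambda>x. f' x $ b)) F"
  by (rule bounded_linear.has_derivative[OF bounded_linear_vec_nth])

lemma ncz_sq: "(ncz Z)^2 = (Z$Zi)^2 + (Z$Zj)^2 + (Z$Zk)^2"
  by (simp add: ncz_def)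

definition ad_dual :: "nvec \<Rightarrow> nvec \<Rightarrow> nvec" where
  "ad_dual x p = (\<chi> b. case b of
       Xi \<Rightarrow> p$Zj * x$Yk - p$Zk * x$Yj
     | Xj \<Rightarrow> p$Zk * x$Yi - p$Zi * x$Yk
     | Yi \<Rightarrow> - (p$Zk * x$Xj)
     | Yj \<Rightarrow> p$Zk * x$Xi
     | Yk \<Rightarrow> p$Zi * x$Xj - p$Zj * x$Xi
     | _ \<Rightarrow> 0)"

lemma inner_ad_dual: "inner U (ad_dual x p) = inner p (brk x U)"
  by (simp add: inner_nvec ad_dual_def brk_def algebra_simps)

lemma adjoint_ltr: "adjoint (ltr x) = (\<lambda>p. p + (1/2) *\<^sub>R ad_dual x p)"
  by (rule adjoint_unique) (simp add: ltr_def inner_add_left inner_add_right inner_ad_dual inner_commute)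

lemma bounded_bilinear_ad_dual: "bounded_bilinear ad_dual"
proof -
  have "bilinear ad_dual"
    unfolding bilinear_def
    by (auto intro!: linearI simp: ad_dual_def vec_eq_iff algebra_simps split: idx.splits)
  then show ?thesis
    by (simp add: bilinear_conv_bounded_bilinear)
qed

lemma ad_dual_zero [simp]: "ad_dual x 0 = 0" "ad_dual 0 p = 0"
  by (simp_all add: ad_dual_def vec_eq_iff split: idx.split)

lemma leg_inv_eq: "leg_inv y = (fst y, snd y + (1/2) *\<^sub>R ad_dual (fst y) (snd y))"
  by (simp add: leg_inv_def adjoint_ltr)

definition leg_inv_deriv :: "tpt \<Rightarrow> tpt \<Rightarrow> tpt" where
  "leg_inv_deriv y u =
     (fst u, snd u + (1/2) *\<^sub>R (ad_dual (fst u) (snd y) + ad_dual (fst y) (snd u)))"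

lemma leg_inv_has_derivative: "(leg_inv has_derivative leg_inv_deriv y) (at y)"
  unfolding leg_inv_eq[abs_def] leg_inv_deriv_def
  by (auto intro!: derivative_eq_intros bounded_bilinear.FDERIV[OF bounded_bilinear_ad_dual]
      simp: fun_eq_iff algebra_simps)

section \<open>Gradients and the Poisson bracket in left trivialisation\<close>

definition pos_grad :: "(tpt \<Rightarrow> real) \<Rightarrow> nvec" where
  "pos_grad D = (\<chi> b. D (bv b, 0))"

definition vel_grad :: "(tpt \<Rightarrow> real) \<Rightarrow> nvec" where
  "vel_grad D = (\<chi> b. D (0, bv b))"

lemma linear_eq_grad:
  assumes "linear D"
  shows "D u = inner (pos_grad D) (fst u) + inner (vel_grad D) (snd u)"
proof -
  interpret D: linear D by fact
  have u: "u = (\<Sum>b\<in>UNIV. (fst u $ b) *\<^sub>R (bv b, 0::nvec)) + (\<Sum>b\<in>UNIV. (snd u $ b) *\<^sub>R (0::nvec, bv b))"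
    by (simp add: prod_eq_iff vec_eq_iff UNIV_idx) (intro conjI allI; case_tac i; simp)
  have "D u = (\<Sum>b\<in>UNIV. (fst u $ b) * D (bv b, 0)) + (\<Sum>b\<in>UNIV. (snd u $ b) * D (0, bv b))"
    by (subst u) (simp add: D.add D.sum D.scale del: scaleR_Pair)
  then show ?thesis
    by (simp add: pos_grad_def vel_grad_def inner_vec_def mult.commute)
qed

lemma linear_eq_omega:
  "linear D \<Longrightarrow> D u = omega u (- vel_grad D, pos_grad D)"
  by (simp add: linear_eq_grad omega_def inner_commute)

definition lt_bracket :: "(tpt \<Rightarrow> real) \<Rightarrow> (tpt \<Rightarrow> real) \<Rightarrow> nvec \<Rightarrow> real" where
  "lt_bracket D E U = inner (vel_grad E) (pos_grad D) - inner (vel_grad D) (pos_grad E)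
     - inner U (brk (vel_grad D) (vel_grad E))"

lemma brk_swap: "brk b a = - brk a b"
  by (simp add: brk_def vec_eq_iff split: idx.split)

lemma lt_bracket_swap: "lt_bracket E D U = - lt_bracket D E U"
  unfolding lt_bracket_def brk_swap[of "vel_grad E"] inner_minus_right by linarith

lemma lt_bracket_self: "lt_bracket D D U = 0"
  using lt_bracket_swap[of D D U] by linarith

lemma lt_bracket_eq_0_swap: "lt_bracket D E U = 0 \<Longrightarrow> lt_bracket E D U = 0"
  using lt_bracket_swap[of E D U] by linarith

lemma pos_grad_comp_leg_inv_deriv:
  assumes "linear D"
  shows "pos_grad (D \<circ> leg_inv_deriv y)
    = (\<chi> b. pos_grad D $ b + (1/2) * inner (vel_grad D) (ad_dual (bv b) (snd y)))"
  by (simp add: pos_grad_def[of "D \<circ> _"] leg_inv_deriv_def linear_eq_grad[OF assms] vec_eq_iff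
      inner_add_right)

lemma vel_grad_comp_leg_inv_deriv:
  assumes "linear D"
  shows "vel_grad (D \<circ> leg_inv_deriv y)
    = (\<chi> b. vel_grad D $ b + (1/2) * inner (vel_grad D) (ad_dual (fst y) (bv b)))"
  by (simp add: vel_grad_def[of "D \<circ> _"] leg_inv_deriv_def linear_eq_grad[OF assms] vec_eq_iff
      inner_add_right)

text \<open>Left translation only adds \<open>z\<close>-terms to the coordinates, so a base derivative without
  \<open>z\<close>-component is also the left invariant one.\<close>

lemma omega_comp_leg_inv_deriv:
  assumes "linear D" "linear E"
    and "\<forall>W\<in>{Zi, Zj, Zk}. pos_grad D $ W = 0 \<and> pos_grad E $ W = 0"
  shows "omega (- vel_grad (D \<circ> leg_inv_deriv y), pos_grad (D \<circ> leg_inv_deriv y))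
               (- vel_grad (E \<circ> leg_inv_deriv y), pos_grad (E \<circ> leg_inv_deriv y))
       = lt_bracket D E (snd (leg_inv y))"
  using assms(3)
  by (simp add: pos_grad_comp_leg_inv_deriv vel_grad_comp_leg_inv_deriv assms(1,2) leg_inv_eq
      omega_def lt_bracket_def inner_nvec ad_dual_def brk_def algebra_simps)

lemma poisson_commute_TN_if_lt_bracket:
  assumes dF: "\<And>y. (F has_derivative DF y) (at y)" and dG: "\<And>y. (G has_derivative DG y) (at y)"
    and z: "\<And>y. \<forall>W\<in>{Zi, Zj, Zk}. pos_grad (DF y) $ W = 0 \<and> pos_grad (DG y) $ W = 0"
    and bracket: "\<And>y. lt_bracket (DF y) (DG y) (snd y) = 0"
  shows "poisson_commute_TN F G"
  unfolding poisson_commute_TN_def poisson_commute_def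
proof
  fix y :: tpt
  let ?DF = "DF (leg_inv y) \<circ> leg_inv_deriv y" and ?DG = "DG (leg_inv y) \<circ> leg_inv_deriv y"
  have hF: "((F \<circ> leg_inv) has_derivative ?DF) (at y)"
    by (rule diff_chain_at[OF leg_inv_has_derivative dF])
  have hG: "((G \<circ> leg_inv) has_derivative ?DG) (at y)"
    by (rule diff_chain_at[OF leg_inv_has_derivative dG])
  have lin: "linear (DF (leg_inv y))" "linear (DG (leg_inv y))"
    using dF dG has_derivative_linear by blast+
  show "\<exists>DF DG XF XG. ((F \<circ> leg_inv) has_derivative DF) (at y)
      \<and> ((G \<circ> leg_inv) has_derivative DG) (at y)
      \<and> (\<forall>u. DF u = omega u XF) \<and> (\<forall>u. DG u = omega u XG) \<and> omega XF XG = 0"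
  proof (intro exI conjI allI)
    show "((F \<circ> leg_inv) has_derivative ?DF) (at y)" "((G \<circ> leg_inv) has_derivative ?DG) (at y)"
      by fact+
    show "?DF u = omega u (- vel_grad ?DF, pos_grad ?DF)" for u
      using hF has_derivative_linear linear_eq_omega by blast
    show "?DG u = omega u (- vel_grad ?DG, pos_grad ?DG)" for u
      using hG has_derivative_linear linear_eq_omega by blast
    show "omega (- vel_grad ?DF, pos_grad ?DF) (- vel_grad ?DG, pos_grad ?DG) = 0"
      using omega_comp_leg_inv_deriv[OF lin z] bracket by simp
  qed
qed

lemma qf_eq: "qf W y = (if W \<in> {Zi, Zj, Zk} then snd y $ W else 0)"
  by (simp add: qf_def)

lemma h1_eq:
  "h1 y = (snd y$Xi * snd y$Zi + snd y$Xj * snd y$Zj)^2 + (snd y$Yj * snd y$Zi - snd y$Yi * snd y$Zj)^2"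
  by (simp add: h1_def E1_def E2_def inner_nvec algebra_simps)

lemma h2_eq:
  "h2 y = ((snd y$Zi)^2 + (snd y$Zj)^2 + (snd y$Zk)^2) * (snd y$Xi * snd y$Zj - snd y$Xj * snd y$Zi)^2
    + (snd y$Zk * (snd y$Yi * snd y$Zi + snd y$Yj * snd y$Zj) - ((snd y$Zi)^2 + (snd y$Zj)^2) * snd y$Yk)^2"
proof -
  have "h2 y = (ncz (zproj (snd y)))^2 * (snd y$Xi * snd y$Zj - snd y$Xj * snd y$Zi)^2
    + (snd y$Zk * (snd y$Yi * snd y$Zi + snd y$Yj * snd y$Zj) - ((snd y$Zi)^2 + (snd y$Zj)^2) * snd y$Yk)^2"
    unfolding h2_def E3_def E4_def Let_def inner_nvec
    by (simp add: power_mult_distrib algebra_simps) (simp add: power2_eq_square algebra_simps)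
  then show ?thesis
    by (simp add: ncz_sq)
qed

lemma kf_eq: "kf y = snd y$Yi * snd y$Zi + snd y$Yj * snd y$Zj + snd y$Yk * snd y$Zk"
  by (simp add: kf_def YZ_def inner_nvec)

definition q_deriv :: "idx \<Rightarrow> tpt \<Rightarrow> tpt \<Rightarrow> real" where
  "q_deriv W y u = (if W \<in> {Zi, Zj, Zk} then snd u $ W else 0)"

definition h1_deriv :: "tpt \<Rightarrow> tpt \<Rightarrow> real" where
  "h1_deriv y u = (let U = snd y; d = snd u in
     2*(U$Xi*U$Zi + U$Xj*U$Zj)*(d$Xi*U$Zi + U$Xi*d$Zi + d$Xj*U$Zj + U$Xj*d$Zj)
   + 2*(U$Yj*U$Zi - U$Yi*U$Zj)*(d$Yj*U$Zi + U$Yj*d$Zi - d$Yi*U$Zj - U$Yi*d$Zj))"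

definition h2_deriv :: "tpt \<Rightarrow> tpt \<Rightarrow> real" where
  "h2_deriv y u = (let U = snd y; d = snd u;
     s = (U$Zi)^2 + (U$Zj)^2 + (U$Zk)^2; ds = 2*U$Zi*d$Zi + 2*U$Zj*d$Zj + 2*U$Zk*d$Zk;
     b1 = U$Xi * U$Zj - U$Xj * U$Zi; db1 = d$Xi * U$Zj + U$Xi * d$Zj - d$Xj * U$Zi - U$Xj * d$Zi;
     b2 = U$Zk * (U$Yi * U$Zi + U$Yj * U$Zj) - ((U$Zi)^2 + (U$Zj)^2) * U$Yk;
     db2 = d$Zk * (U$Yi * U$Zi + U$Yj * U$Zj) + U$Zk * (d$Yi * U$Zi + U$Yi * d$Zi + d$Yj * U$Zj + U$Yj * d$Zj)
        - (2*U$Zi*d$Zi + 2*U$Zj*d$Zj) * U$Yk - ((U$Zi)^2 + (U$Zj)^2) * d$Yk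
   in ds * b1^2 + 2 * s * b1 * db1 + 2 * b2 * db2)"

definition k_deriv :: "tpt \<Rightarrow> tpt \<Rightarrow> real" where
  "k_deriv y u = (let U = snd y; d = snd u in
     d$Yi * U$Zi + U$Yi * d$Zi + d$Yj * U$Zj + U$Yj * d$Zj + d$Yk * U$Zk + U$Yk * d$Zk)"

lemma qf_has_derivative: "(qf W has_derivative q_deriv W y) (at y)"
  unfolding qf_eq[abs_def] q_deriv_def
  by (cases "W \<in> {Zi, Zj, Zk}") (auto intro!: derivative_eq_intros)

lemma h1_has_derivative: "(h1 has_derivative h1_deriv y) (at y)"
  unfolding h1_eq[abs_def] h1_deriv_def Let_def
  by (rule derivative_eq_intros refl)+ (simp add: fun_eq_iff algebra_simps)

lemma h2_has_derivative: "(h2 has_derivative h2_deriv y) (at y)"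
  unfolding h2_eq[abs_def] h2_deriv_def Let_def
  by (rule derivative_eq_intros refl)+ (simp add: fun_eq_iff algebra_simps)

lemma kf_has_derivative: "(kf has_derivative k_deriv y) (at y)"
  unfolding kf_eq[abs_def] k_deriv_def Let_def
  by (rule derivative_eq_intros refl)+ (simp add: fun_eq_iff algebra_simps)

definition dphi :: "real \<Rightarrow> real" where
  "dphi x = exp (-1/x^2) * (2 / x^3)"

lemma phi_has_real_derivative: "x \<noteq> 0 \<Longrightarrow> (phi has_real_derivative dphi x) (at x)"
proof -
  assume x: "x \<noteq> 0"
  have "((\<lambda>x. exp (-1/x^2)) has_real_derivative dphi x) (at x)"
    using x by (auto intro!: derivative_eq_intros simp: dphi_def field_simps power2_eq_square power3_eq_cube)
  then show ?thesis
    by (rule has_field_derivative_transform_within_open[where S="{x. x \<noteq> 0}"])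
       (auto simp: x phi_def open_Collect_neq)
qed

lemma phi_bounds: "0 \<le> phi x \<and> phi x \<le> x^2"
proof (cases "x = 0")
  case False
  then have pos: "x^2 > 0"
    by simp
  have "1/x^2 \<le> exp (1/x^2)"
    using exp_ge_add_one_self[of "1/x^2"] by linarith
  then have "inverse (exp (1/x^2)) \<le> inverse (1/x^2)"
    using pos by (intro le_imp_inverse_le) auto
  then show ?thesis
    using False pos by (simp add: phi_def exp_minus)
qed (simp add: phi_def)

lemma phi_comp_has_derivative:
  assumes "(g has_derivative g') (at y)" "g y \<noteq> 0"
  shows "((\<lambda>z. phi (g z)) has_derivative (\<lambda>u. dphi (g y) * g' u)) (at y)"
  using has_derivative_compose[OF assms(1)
      phi_has_real_derivative[OF assms(2), unfolded has_field_derivative_def]] .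

text \<open>With \<open>cz_den U = c\<^sub>k |c|\<^sup>2\<close>, the \<open>X\<close>-component of \<open>C(Z) V\<^sub>y\<close> is \<open>cz_num X U / cz_den U\<close>.\<close>

definition cz_den :: "nvec \<Rightarrow> real" where
  "cz_den U = U$Zk * ((U$Zi)^2 + (U$Zj)^2 + (U$Zk)^2)"

definition cz_num :: "idx \<Rightarrow> nvec \<Rightarrow> real" where
  "cz_num X U = (if X = Xi
     then (-(U$Zi*U$Zj))*U$Yi + ((U$Zi)^2+(U$Zk)^2)*U$Yj + (-(U$Zj*U$Zk))*U$Yk
     else (-((U$Zj)^2) - (U$Zk)^2)*U$Yi + (U$Zi*U$Zj)*U$Yj + (U$Zi*U$Zk)*U$Yk)"

definition f_phase :: "idx \<Rightarrow> tpt \<Rightarrow> real" where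
  "f_phase X y = fst y $ X - cz_num X (snd y) / cz_den (snd y)"

lemma ff_eq:
  "X \<in> {Xi, Xj} \<Longrightarrow> snd y $ Zk \<noteq> 0 \<Longrightarrow> ff X y = phi (cz_den (snd y)) * sin (2*pi * f_phase X y)"
  by (auto simp: ff_def PhiZ_def cz_den_def cz_num_def f_phase_def CZ_def Let_def ncz_sq inner_nvec)

lemma cz_den_nonzero: "U$Zk \<noteq> 0 \<Longrightarrow> cz_den U \<noteq> 0"
  by (simp add: cz_den_def add_nonneg_eq_0_iff)

definition cz_den_deriv :: "nvec \<Rightarrow> nvec \<Rightarrow> real" where
  "cz_den_deriv U d = d$Zk * ((U$Zi)^2 + (U$Zj)^2 + (U$Zk)^2) + U$Zk * (2*U$Zi*d$Zi + 2*U$Zj*d$Zj + 2*U$Zk*d$Zk)"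

definition cz_num_deriv :: "idx \<Rightarrow> nvec \<Rightarrow> nvec \<Rightarrow> real" where
  "cz_num_deriv X U d = (if X = Xi then
      -(d$Zi*U$Zj + U$Zi*d$Zj)*U$Yi - U$Zi*U$Zj*d$Yi + (2*U$Zi*d$Zi + 2*U$Zk*d$Zk)*U$Yj
      + ((U$Zi)^2+(U$Zk)^2)*d$Yj - (d$Zj*U$Zk + U$Zj*d$Zk)*U$Yk - U$Zj*U$Zk*d$Yk
    else -(2*U$Zj*d$Zj + 2*U$Zk*d$Zk)*U$Yi + (-((U$Zj)^2)-(U$Zk)^2)*d$Yi + (d$Zi*U$Zj + U$Zi*d$Zj)*U$Yj
      + U$Zi*U$Zj*d$Yj + (d$Zi*U$Zk + U$Zi*d$Zk)*U$Yk + U$Zi*U$Zk*d$Yk)"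

lemma cz_den_has_derivative:
  "((\<lambda>y. cz_den (snd y)) has_derivative (\<lambda>u. cz_den_deriv (snd y) (snd u))) (at y)"
  unfolding cz_den_def[abs_def] cz_den_deriv_def
  by (rule derivative_eq_intros refl)+ (simp add: fun_eq_iff algebra_simps)

lemma cz_num_has_derivative:
  "((\<lambda>y. cz_num X (snd y)) has_derivative (\<lambda>u. cz_num_deriv X (snd y) (snd u))) (at y)"
  unfolding cz_num_def[abs_def] cz_num_deriv_def
  by (cases "X = Xi"; simp; (rule derivative_eq_intros refl)+; simp add: fun_eq_iff algebra_simps)

definition f_deriv :: "idx \<Rightarrow> tpt \<Rightarrow> tpt \<Rightarrow> real" where
  "f_deriv X y u = (if snd y $ Zk = 0 then 0 else
     dphi (cz_den (snd y)) * cz_den_deriv (snd y) (snd u) * sin (2*pi * f_phase X y)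
     + phi (cz_den (snd y)) * (cos (2*pi * f_phase X y) * (2*pi * (fst u $ X
         - (cz_num_deriv X (snd y) (snd u) * cz_den (snd y) - cz_num X (snd y) * cz_den_deriv (snd y) (snd u))
           / (cz_den (snd y))^2))))"

lemma ff_has_derivative_off_flat:
  assumes X: "X \<in> {Xi, Xj}" and nz: "snd y $ Zk \<noteq> 0"
  shows "(ff X has_derivative f_deriv X y) (at y)"
proof -
  have den: "cz_den (snd y) \<noteq> 0"
    using cz_den_nonzero nz by blast
  have "((\<lambda>z. phi (cz_den (snd z)) * sin (2*pi * f_phase X z)) has_derivative f_deriv X y) (at y)"
    unfolding f_deriv_def f_phase_def
    by (insert nz den, simp, (rule derivative_eq_intros refl cz_den_has_derivative cz_num_has_derivative
        phi_comp_has_derivative | assumption)+, simp add: fun_eq_iff field_simps power2_eq_square)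
  then show ?thesis
    by (rule has_derivative_transform_within_open[where s="{z. snd z $ Zk \<noteq> 0}"])
       (use nz X in \<open>auto simp: ff_eq intro!: open_Collect_neq continuous_intros\<close>)
qed

lemma abs_ff_le: "\<bar>ff X z\<bar> \<le> (cz_den (snd z))^2"
proof (cases "snd z $ Zk = 0")
  case False
  have "\<bar>ff X z\<bar> \<le> \<bar>PhiZ (zproj (snd z))\<bar>"
    using False abs_sin_le_one[of "2 * pi * _"]
    by (simp add: ff_def Let_def abs_mult mult_left_le)
  also have "PhiZ (zproj (snd z)) = phi (cz_den (snd z))"
    by (simp add: PhiZ_def cz_den_def ncz_sq)
  finally show ?thesis
    using phi_bounds[of "cz_den (snd z)"] by simp
qed (simp add: ff_def)

lemma abs_cz_den_le:
  assumes "snd y $ Zk = 0"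
  shows "\<bar>cz_den (snd z)\<bar> \<le> norm (z - y) * (norm z)^2"
proof -
  have "\<bar>snd z $ Zk\<bar> = \<bar>snd (z - y) $ Zk\<bar>"
    using assms by simp
  also have "\<dots> \<le> norm (z - y)"
    by (metis component_le_norm_cart norm_snd_le order_trans prod.collapse)
  finally have ck: "\<bar>snd z $ Zk\<bar> \<le> norm (z - y)" .
  have "(snd z$Zi)^2 + (snd z$Zj)^2 + (snd z$Zk)^2 \<le> inner (snd z) (snd z)"
    by (simp add: inner_nvec power2_eq_square)
  also have "\<dots> = (norm (snd z))^2"
    by (simp add: power2_norm_eq_inner)
  also have "\<dots> \<le> (norm z)^2"
    by (metis norm_snd_le prod.collapse norm_ge_zero power_mono)
  finally have "(snd z$Zi)^2 + (snd z$Zj)^2 + (snd z$Zk)^2 \<le> (norm z)^2" .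
  with ck show ?thesis
    by (simp add: cz_den_def abs_mult mult_mono)
qed

lemma ff_has_derivative_on_flat:
  assumes flat: "snd y $ Zk = 0"
  shows "(ff X has_derivative f_deriv X y) (at y)"
proof -
  have bound: "\<bar>ff X z - ff X y\<bar> / norm (z - y) \<le> norm (z - y) * (norm z)^4" for z
  proof (cases "z = y")
    case False
    have "\<bar>ff X z\<bar> \<le> \<bar>cz_den (snd z)\<bar>^2"
      using abs_ff_le by simp
    also have "\<dots> \<le> (norm (z - y) * (norm z)^2)^2"
      using abs_cz_den_le[OF flat, of z] by (intro power_mono) auto
    finally have "\<bar>ff X z\<bar> \<le> norm (z - y) * (norm (z - y) * (norm z)^4)"
      by (simp add: power2_eq_square numeral_eq_Suc mult_ac)
    then show ?thesis
      using False flat by (simp add: ff_def divide_le_eq mult.commute)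
  qed simp
  have "((\<lambda>z. norm (z - y) * (norm z)^4) \<longlongrightarrow> norm (y - y) * (norm y)^4) (at y)"
    by (intro tendsto_intros)
  then have "((\<lambda>z. norm (z - y) * (norm z)^4) \<longlongrightarrow> 0) (at y)"
    by simp
  then have "((\<lambda>z. norm (ff X z - ff X y - 0) / norm (z - y)) \<longlongrightarrow> 0) (at y)"
    by (rule Lim_null_comparison[rotated]) (simp add: bound always_eventually)
  moreover have "f_deriv X y = (\<lambda>u. 0)"
    using flat by (simp add: f_deriv_def fun_eq_iff)
  ultimately show ?thesis
    by (simp add: has_derivative_iff_norm)
qed

lemma ff_has_derivative: "X \<in> {Xi, Xj} \<Longrightarrow> (ff X has_derivative f_deriv X y) (at y)"
  using ff_has_derivative_on_flat ff_has_derivative_off_flat by blast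

section \<open>Poisson commutation\<close>

definition fam_deriv :: "fidx \<Rightarrow> tpt \<Rightarrow> tpt \<Rightarrow> real" where
  "fam_deriv a = (case a of QZi \<Rightarrow> q_deriv Zi | QZj \<Rightarrow> q_deriv Zj | QZk \<Rightarrow> q_deriv Zk
     | H1 \<Rightarrow> h1_deriv | H2 \<Rightarrow> h2_deriv | K \<Rightarrow> k_deriv | FXi \<Rightarrow> f_deriv Xi | FXj \<Rightarrow> f_deriv Xj)"

lemma fam_has_derivative: "(fam a has_derivative fam_deriv a y) (at y)"
  by (cases a) (simp_all add: fam_def fam_deriv_def qf_has_derivative h1_has_derivative
      h2_has_derivative kf_has_derivative ff_has_derivative)

definition f_amp :: "idx \<Rightarrow> tpt \<Rightarrow> real" where
  "f_amp X y = 2*pi * phi (cz_den (snd y)) * cos (2*pi * f_phase X y)"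

lemma pos_grad_f_deriv:
  "pos_grad (f_deriv X y) $ b = (if snd y $ Zk = 0 \<or> b \<noteq> X then 0 else f_amp X y)"
  by (simp add: pos_grad_def f_deriv_def cz_den_deriv_def cz_num_deriv_def f_amp_def)

lemma vel_grad_f_deriv:
  "b \<in> {Xi, Xj, Yi, Yj, Yk} \<Longrightarrow> snd y $ Zk \<noteq> 0 \<Longrightarrow>
    vel_grad (f_deriv X y) $ b = - f_amp X y * cz_num_deriv X (snd y) (bv b) / cz_den (snd y)"
  by (frule cz_den_nonzero)
     (auto simp: vel_grad_def f_deriv_def cz_den_deriv_def f_amp_def field_simps power2_eq_square)

lemma vel_grad_f_deriv_flat: "snd y $ Zk = 0 \<Longrightarrow> vel_grad (f_deriv X y) = 0"
  by (simp add: vel_grad_def f_deriv_def vec_eq_iff)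

lemma pos_grad_velocity_functions [simp]:
  "pos_grad (h1_deriv y) = 0" "pos_grad (h2_deriv y) = 0" "pos_grad (k_deriv y) = 0"
  "pos_grad (q_deriv W y) = 0"
  by (simp_all add: pos_grad_def h1_deriv_def h2_deriv_def k_deriv_def q_deriv_def vec_eq_iff Let_def)

lemma lt_bracket_eq_vproj:
  assumes "\<forall>W\<in>{Zi, Zj, Zk}. pos_grad D $ W = 0 \<and> pos_grad E $ W = 0"
  shows "lt_bracket D E U = inner (vproj (vel_grad E)) (pos_grad D) - inner (vproj (vel_grad D)) (pos_grad E)
    - inner U (brk (vproj (vel_grad D)) (vproj (vel_grad E)))"
  using assms by (simp add: lt_bracket_def inner_nvec brk_def)

text \<open>The phase \<open>\<langle>X, v\<^sub>x - C(Z) V\<^sub>y\<rangle>\<close> Poisson commutes with every function of the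
  velocity alone; this is what the choice of \<open>C(Z)\<close> achieves.\<close>

lemma lt_bracket_f_velocity_function:
  assumes E: "pos_grad E = 0" and X: "X \<in> {Xi, Xj}"
  shows "lt_bracket (f_deriv X y) E (snd y) = 0"
proof (cases "snd y $ Zk = 0")
  case True
  then show ?thesis
    using E by (simp add: lt_bracket_def vel_grad_f_deriv_flat pos_grad_f_deriv inner_nvec brk_def)
next
  case False
  have "cz_den (snd y) \<noteq> 0"
    using False by (rule cz_den_nonzero)
  with X False E show ?thesis
    by (subst lt_bracket_eq_vproj)
      (auto simp: pos_grad_f_deriv vel_grad_f_deriv inner_nvec brk_def cz_num_deriv_def field_simps,
       auto simp: cz_den_def power2_eq_square algebra_simps)
qed

lemma lt_bracket_f_f: "lt_bracket (f_deriv Xi y) (f_deriv Xj y) (snd y) = 0"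
proof (cases "snd y $ Zk = 0")
  case True
  then show ?thesis
    by (simp add: lt_bracket_def vel_grad_f_deriv_flat pos_grad_f_deriv inner_nvec brk_def)
next
  case False
  have "cz_den (snd y) \<noteq> 0"
    using False by (rule cz_den_nonzero)
  with False show ?thesis
    by (subst lt_bracket_eq_vproj)
      (simp_all add: pos_grad_f_deriv vel_grad_f_deriv inner_nvec brk_def cz_num_deriv_def field_simps)
qed

lemma lt_bracket_q:
  "W \<in> {Zi, Zj, Zk} \<Longrightarrow> pos_grad E $ W = 0 \<Longrightarrow> lt_bracket (q_deriv W y) E U = 0"
  by (auto simp: lt_bracket_def vel_grad_def q_deriv_def inner_nvec brk_def)

lemma lt_bracket_h1_h2: "lt_bracket (h1_deriv y) (h2_deriv y) (snd y) = 0"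
  by (simp add: lt_bracket_def vel_grad_def h1_deriv_def h2_deriv_def inner_nvec brk_def Let_def
      algebra_simps)

lemma lt_bracket_h1_k: "lt_bracket (h1_deriv y) (k_deriv y) (snd y) = 0"
  by (simp add: lt_bracket_def vel_grad_def h1_deriv_def k_deriv_def inner_nvec brk_def Let_def
      algebra_simps)

lemma lt_bracket_h2_k: "lt_bracket (h2_deriv y) (k_deriv y) (snd y) = 0"
  by (simp add: lt_bracket_def vel_grad_def h2_deriv_def k_deriv_def inner_nvec brk_def Let_def
      algebra_simps)

lemma lt_bracket_fam_deriv: "lt_bracket (fam_deriv a y) (fam_deriv b y) (snd y) = 0"
  by (cases a; cases b;
      simp add: fam_deriv_def lt_bracket_self lt_bracket_f_velocity_function lt_bracket_f_f
        lt_bracket_q pos_grad_f_deriv lt_bracket_h1_h2 lt_bracket_h1_k lt_bracket_h2_k;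
      (rule lt_bracket_eq_0_swap, simp add: lt_bracket_f_velocity_function lt_bracket_f_f
        lt_bracket_q pos_grad_f_deriv lt_bracket_h1_h2 lt_bracket_h1_k lt_bracket_h2_k)?)

lemma poisson_commute_fam: "poisson_commute_TN (fam a) (fam b)"
proof (rule poisson_commute_TN_if_lt_bracket[OF fam_has_derivative fam_has_derivative])
  show "\<forall>W\<in>{Zi, Zj, Zk}. pos_grad (fam_deriv a y) $ W = 0 \<and> pos_grad (fam_deriv b y) $ W = 0" for y
    by (cases a; cases b) (simp_all add: fam_deriv_def pos_grad_f_deriv)
qed (rule lt_bracket_fam_deriv)

section \<open>Functional independence on an open dense set\<close>

text \<open>The second and third conditions say \<open>\<langle>V, E\<^sub>1(Z)\<rangle> \<noteq> 0\<close> and \<open>\<langle>V, E\<^sub>3(Z)\<rangle> \<noteq> 0\<close>.\<close>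

definition generic_set :: "tpt set" where
  "generic_set = {y. snd y $ Zk \<noteq> 0
     \<and> snd y$Xi * snd y$Zi + snd y$Xj * snd y$Zj \<noteq> 0
     \<and> snd y$Xi * snd y$Zj - snd y$Xj * snd y$Zi \<noteq> 0
     \<and> cos (2*pi * f_phase Xi y) \<noteq> 0 \<and> cos (2*pi * f_phase Xj y) \<noteq> 0}"

lemma open_generic_set: "open generic_set"
proof -
  let ?O = "{y :: tpt. snd y $ Zk \<noteq> 0}"
  have open_O: "open ?O"
    by (intro open_Collect_neq continuous_intros)
  have "continuous_on ?O (\<lambda>y. cos (2*pi * f_phase X y))" for X
    unfolding f_phase_def cz_num_def cz_den_def
    by (cases "X = Xi") (auto intro!: continuous_intros simp: add_nonneg_eq_0_iff)
  then have open_cos: "open (?O \<inter> (\<lambda>y. cos (2*pi * f_phase X y)) -` (- {0}))" for X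
    by (rule continuous_open_preimage[OF _ open_O]) auto
  have eq: "generic_set = ?O \<inter> {y. snd y$Xi * snd y$Zi + snd y$Xj * snd y$Zj \<noteq> 0}
     \<inter> {y. snd y$Xi * snd y$Zj - snd y$Xj * snd y$Zi \<noteq> 0}
     \<inter> (?O \<inter> (\<lambda>y. cos (2*pi * f_phase Xi y)) -` (- {0}))
     \<inter> (?O \<inter> (\<lambda>y. cos (2*pi * f_phase Xj y)) -` (- {0}))"
    by (auto simp: generic_set_def)
  show ?thesis
    unfolding eq by (intro open_Int open_O open_cos open_Collect_neq continuous_intros)
qed

text \<open>The differentials are triangular with respect to the test directions \<open>X\<^sub>i, X\<^sub>j\<close> (in the
  base), \<open>E\<^sub>1(Z)\<close>, \<open>E\<^sub>3(Z)/|c|\<close>, \<open>Y\<^sub>k\<close> and \<open>Z\<^sub>i, Z\<^sub>j, Z\<^sub>k\<close> (in the fibre).\<close>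

lemma fam_deriv_independent:
  assumes y: "y \<in> generic_set" and dep: "\<forall>u. (\<Sum>a\<in>UNIV. c a * fam_deriv a y u) = 0"
  shows "c a = 0"
proof -
  define U where "U = snd y"
  have ck: "U$Zk \<noteq> 0" and E1: "U$Xi * U$Zi + U$Xj * U$Zj \<noteq> 0"
    and E3: "U$Xi * U$Zj - U$Xj * U$Zi \<noteq> 0"
    using y by (auto simp: generic_set_def U_def)
  have cos: "cos (2*pi * f_phase X y) \<noteq> 0" if "X \<in> {Xi, Xj}" for X
    using y that by (auto simp: generic_set_def)
  have lin: "c QZi * q_deriv Zi y u + c QZj * q_deriv Zj y u + c QZk * q_deriv Zk y u + c H1 * h1_deriv y u
     + c H2 * h2_deriv y u + c K * k_deriv y u + c FXi * f_deriv Xi y u + c FXj * f_deriv Xj y u = 0" for u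
    using dep[rule_format, of u] by (simp add: UNIV_fidx fam_deriv_def add.assoc)
  have amp: "f_amp Xi y \<noteq> 0" "f_amp Xj y \<noteq> 0"
    using cos[of Xi] cos[of Xj] cz_den_nonzero[OF ck] by (simp_all add: f_amp_def phi_def U_def)
  have f: "c FXi = 0" "c FXj = 0"
    using lin[of "(bv Xi, 0)"] lin[of "(bv Xj, 0)"] ck amp
    by (simp_all add: q_deriv_def h1_deriv_def h2_deriv_def k_deriv_def f_deriv_def cz_den_deriv_def
        cz_num_deriv_def f_amp_def U_def)
  have s1: "(U$Zi)^2 + (U$Zj)^2 \<noteq> 0"
    using E1 by (auto simp: add_nonneg_eq_0_iff)
  have s2: "(U$Zi)^2 + (U$Zj)^2 + (U$Zk)^2 \<noteq> 0"
    using ck by (auto simp: add_nonneg_eq_0_iff)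
  have "c H1 * (2 * (U$Xi * U$Zi + U$Xj * U$Zj) * ((U$Zi)^2 + (U$Zj)^2)) = 0"
    using lin[of "(0, U$Zi *\<^sub>R bv Xi + U$Zj *\<^sub>R bv Xj)"] f
    by (simp add: U_def q_deriv_def h1_deriv_def h2_deriv_def k_deriv_def Let_def power2_eq_square
        algebra_simps)
  then have h1: "c H1 = 0"
    using E1 s1 by auto
  have "c H2 * (2 * ((U$Zi)^2 + (U$Zj)^2 + (U$Zk)^2) * (U$Xi * U$Zj - U$Xj * U$Zi) * ((U$Zi)^2 + (U$Zj)^2)) = 0"
    using lin[of "(0, U$Zj *\<^sub>R bv Xi - U$Zi *\<^sub>R bv Xj)"] f h1
    by (simp add: U_def q_deriv_def h2_deriv_def k_deriv_def Let_def power2_eq_square algebra_simps)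
  then have h2: "c H2 = 0"
    using E3 s1 s2 by auto
  have k: "c K = 0"
    using lin[of "(0, bv Yk)"] f h1 h2 ck by (simp add: U_def q_deriv_def k_deriv_def)
  have q: "c QZi = 0" "c QZj = 0" "c QZk = 0"
    using lin[of "(0, bv Zi)"] lin[of "(0, bv Zj)"] lin[of "(0, bv Zk)"] f h1 h2 k
    by (simp_all add: q_deriv_def)
  show ?thesis
    using f h1 h2 k q by (cases a) auto
qed

lemma wedge_nonzero_at_generic:
  assumes "y \<in> generic_set"
  shows "wedge_nonzero_at fam y"
  unfolding wedge_nonzero_at_def
  using fam_has_derivative fam_deriv_independent[OF assms] by (intro exI[of _ "\<lambda>a. fam_deriv a y"]) blast

text \<open>Each of the two expressions is affine in \<open>s\<close> and not constantly zero, so it vanishes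
  for at most one of the three candidates.\<close>

lemma exists_shift_avoiding_zeros:
  fixes x ci cj xj d :: real
  assumes ci: "ci \<noteq> 0" and xj: "xj \<noteq> 0" and d: "d > 0"
  shows "\<exists>s\<in>{0, d/2, d}. (x + s)*ci + xj*cj \<noteq> 0 \<and> (x + s)*cj - xj*ci \<noteq> 0"
proof (rule ccontr)
  assume "\<not> ?thesis"
  then have zero: "(x + s)*ci + xj*cj = 0 \<or> (x + s)*cj - xj*ci = 0" if "s \<in> {0, d/2, d}" for s
    using that by blast
  have first: "s1 = s2" if "(x + s1)*ci + xj*cj = 0" "(x + s2)*ci + xj*cj = 0" for s1 s2
  proof -
    have "(s1 - s2) * ci = ((x + s1)*ci + xj*cj) - ((x + s2)*ci + xj*cj)"
      by (simp add: algebra_simps)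
    then show ?thesis
      using that ci by simp
  qed
  have second: "s1 = s2" if "(x + s1)*cj - xj*ci = 0" "(x + s2)*cj - xj*ci = 0" for s1 s2
  proof -
    have "(s1 - s2) * cj = ((x + s1)*cj - xj*ci) - ((x + s2)*cj - xj*ci)"
      by (simp add: algebra_simps)
    then have "(s1 - s2) * cj = 0"
      using that by simp
    moreover have "cj \<noteq> 0"
      using that ci xj by auto
    ultimately show ?thesis
      by simp
  qed
  have "0 \<noteq> d/2" "0 \<noteq> d" "d/2 \<noteq> d"
    using d by auto
  then show False
    using zero[of 0] zero[of "d/2"] zero[of d] first[of 0 "d/2"] first[of 0 d] first[of "d/2" d]
      second[of 0 "d/2"] second[of 0 d] second[of "d/2" d]
    by auto
qed

lemma exists_generic_velocity:
  assumes d: "d > 0"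
  obtains U' :: nvec where "norm (U' - U) \<le> 4*d" "U'$Zk \<noteq> 0"
    "U'$Xi * U'$Zi + U'$Xj * U'$Zj \<noteq> 0" "U'$Xi * U'$Zj - U'$Xj * U'$Zi \<noteq> 0"
proof -
  define a1 where "a1 = (if U$Zk \<noteq> 0 then 0 else d)"
  define a2 where "a2 = (if U$Zi \<noteq> 0 then 0 else d)"
  define a3 where "a3 = (if U$Xj \<noteq> 0 then 0 else d)"
  define U1 where "U1 = U + a1 *\<^sub>R bv Zk + a2 *\<^sub>R bv Zi + a3 *\<^sub>R bv Xj"
  have U1: "U1$Zk \<noteq> 0" "U1$Zi \<noteq> 0" "U1$Xj \<noteq> 0"
    using d by (auto simp: U1_def a1_def a2_def a3_def)
  obtain s where s: "s \<in> {0, d/2, d}" "(U1$Xi + s)*U1$Zi + U1$Xj*U1$Zj \<noteq> 0"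
    "(U1$Xi + s)*U1$Zj - U1$Xj*U1$Zi \<noteq> 0"
    using exists_shift_avoiding_zeros[OF U1(2,3) d] by blast
  define U' where "U' = U1 + s *\<^sub>R bv Xi"
  have "U' - U = a1 *\<^sub>R bv Zk + (a2 *\<^sub>R bv Zi + (a3 *\<^sub>R bv Xj + s *\<^sub>R bv Xi))"
    by (simp add: U'_def U1_def algebra_simps)
  also have "norm \<dots> \<le> \<bar>a1\<bar> + (\<bar>a2\<bar> + (\<bar>a3\<bar> + \<bar>s\<bar>))"
    by (intro norm_triangle_le add_left_mono add_mono) simp_all
  also have "\<dots> \<le> 4*d"
    using s(1) d by (auto simp: a1_def a2_def a3_def)
  finally show thesis
    using that U1 s(2,3) by (simp add: U'_def algebra_simps)
qed

lemma cos_shift_ne_zero: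
  assumes c: "cos (2*pi*a) = 0" and t: "0 < t" "t \<le> 1/8"
  shows "cos (2*pi*(a + t)) \<noteq> 0"
proof -
  have "sin (2*pi*a) \<noteq> 0"
    using sin_cos_squared_add[of "2*pi*a"] c by auto
  moreover have "sin (2*pi*t) > 0"
    using t pi_gt_zero by (intro sin_gt_zero) (auto simp: field_simps)
  moreover have "cos (2*pi*(a + t)) = - (sin (2*pi*a) * sin (2*pi*t))"
    using c by (simp add: distrib_left cos_add)
  ultimately show ?thesis
    by simp
qed

lemma exists_generic_position:
  assumes t: "0 < t" "t \<le> 1/8"
  obtains w' where "norm (w' - w) \<le> 2*t"
    "cos (2*pi * f_phase Xi (w', U)) \<noteq> 0" "cos (2*pi * f_phase Xj (w', U)) \<noteq> 0"
proof -
  define ti where "ti = (if cos (2*pi * f_phase Xi (w, U)) \<noteq> 0 then 0 else t)"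
  define tj where "tj = (if cos (2*pi * f_phase Xj (w, U)) \<noteq> 0 then 0 else t)"
  define w' where "w' = w + ti *\<^sub>R bv Xi + tj *\<^sub>R bv Xj"
  have phase: "f_phase Xi (w', U) = f_phase Xi (w, U) + ti" "f_phase Xj (w', U) = f_phase Xj (w, U) + tj"
    by (simp_all add: w'_def f_phase_def)
  have "cos (2*pi * f_phase Xi (w', U)) \<noteq> 0" "cos (2*pi * f_phase Xj (w', U)) \<noteq> 0"
    using cos_shift_ne_zero[OF _ t, of "f_phase Xi (w, U)"] cos_shift_ne_zero[OF _ t, of "f_phase Xj (w, U)"]
    by (auto simp: phase ti_def tj_def)
  moreover have "norm (w' - w) \<le> \<bar>ti\<bar> + \<bar>tj\<bar>"
    unfolding w'_def by (simp add: norm_triangle_le)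
  moreover have "\<bar>ti\<bar> + \<bar>tj\<bar> \<le> 2*t"
    using t by (simp add: ti_def tj_def)
  ultimately show thesis
    using that by (meson order_trans)
qed

lemma closure_generic_set: "closure generic_set = UNIV"
proof -
  have "\<exists>y'\<in>generic_set. dist y' y < e" if e: "e > 0" for y :: tpt and e :: real
  proof -
    obtain w U where y: "y = (w, U)"
      by fastforce
    obtain U' where U': "norm (U' - U) \<le> 4*(e/8)" "U'$Zk \<noteq> 0"
      "U'$Xi * U'$Zi + U'$Xj * U'$Zj \<noteq> 0" "U'$Xi * U'$Zj - U'$Xj * U'$Zi \<noteq> 0"
      using exists_generic_velocity[of "e/8" U] e by auto
    have t: "0 < min (e/8) (1/8)" "min (e/8) (1/8) \<le> 1/8"
      using e by auto
    obtain w' where w': "norm (w' - w) \<le> 2 * min (e/8) (1/8)"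
      "cos (2*pi * f_phase Xi (w', U')) \<noteq> 0" "cos (2*pi * f_phase Xj (w', U')) \<noteq> 0"
      using exists_generic_position[OF t] by blast
    have "(w', U') \<in> generic_set"
      using U' w' by (simp add: generic_set_def)
    moreover have "dist (w', U') y \<le> norm (w' - w) + norm (U' - U)"
      by (simp add: y dist_norm norm_Pair_le)
    ultimately show ?thesis
      using U'(1) w'(1) e by (intro bexI[of _ "(w', U')"]) auto
  qed
  then show ?thesis
    by (auto simp: closure_approachable)
qed

theorem lemma4p5:
  shows "(\<exists>S :: tpt set. open S \<and> closure S = UNIV \<and> (\<forall>y\<in>S. wedge_nonzero_at fam y))
       \<and> (\<forall>a b. poisson_commute_TN (fam a) (fam b))"
  using open_generic_set closure_generic_set wedge_nonzero_at_generic poisson_commute_fam by blast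

end
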